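(* Let $q>p-1$ with $p>1$, $\sigma_j^2\asymp j^{-q}$, and let $Y_1$ be a $\mathcal{Y}$-valued random variable with $\mathbb{E}Y_1=\hat y=K\hat x$ and $\mathbb{E}(Y_1-\hat y,u_j)^2\asymp j^{-p}$. Let $0<\varepsilon<p-1$ and let $S$ be the (unbounded) linear operator $S\big(\sum_j\alpha_ju_j\big):=\sum_jd_j\alpha_ju_j$ with $d_j:=j^{\frac{p-1-\varepsilon}{2}}$, on the domain $\{\sum_j\alpha_ju_j:\sum_j\alpha_j^2d_j^2<\infty\}$. Then $SK:\mathcal{X}\to\mathcal{Y}$ is compact with singular values $d_j\sigma_j\asymp j^{-\frac{q+1+\varepsilon-p}{2}}$ and the same singular vectors $(v_j),(u_j)$; $\mathbb{E}\|SY_1-S\hat y\|^2<\infty$; and if $\hat x\in\mathcal{X}_{\nu,\rho}$ then, with $\nu':=\frac{q}{q+1+\varepsilon-p}\nu>\nu$, there is a constant $c>0$ (independent of $\hat x$ and $\rho$) such that $\hat x=((SK)^*SK)^{\nu'/2}\xi'$ for some $\xi'$ with $\|\xi'\|\le c\rho$.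
   Context: $K:\mathcal{X}\to\mathcal{Y}$ is a compact linear operator between infinite-dimensional real separable Hilbert spaces with dense range and singular value decomposition $(\sigma_j,u_j,v_j)_{j\in\mathbb{N}}$: $(u_j)$ orthonormal basis of $\mathcal{Y}$, $(v_j)$ orthonormal basis of $\mathcal{N}(K)^\perp$, $\sigma_j>0$ nonincreasing to $0$, $Kv_j=\sigma_ju_j$. For $\nu,\rho>0$, $\mathcal{X}_{\nu,\rho}:=\{(K^*K)^{\nu/2}\xi:\|\xi\|\le\rho\}=\{\sum_j\sigma_j^\nu(\xi,v_j)v_j:\|\xi\|\le\rho\}$. $a_j\asymp b_j$ means two-sided bounds with constants independent of $j$. *)

theory Defs
  imports "HOL-Analysis.Analysis" "HOL-Probability.Probability"
begin

definition asymp_equiv2 :: "(nat \<Rightarrow> real) \<Rightarrow> (nat \<Rightarrow> real) \<Rightarrow> bool" where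
  "asymp_equiv2 a b \<longleftrightarrow> (\<exists>c1 c2. c1 > 0 \<and> c2 > 0 \<and> (\<forall>j. c1 * b j \<le> a j \<and> a j \<le> c2 * b j))"

definition compact_operator :: "('a::real_normed_vector \<Rightarrow> 'b::real_normed_vector) \<Rightarrow> bool" where
  "compact_operator T \<longleftrightarrow> bounded_linear T \<and> compact (closure (T ` cball 0 1))"

definition orthonormal_seq :: "(nat \<Rightarrow> 'a::real_inner) \<Rightarrow> bool" where
  "orthonormal_seq e \<longleftrightarrow> (\<forall>i j. e i \<bullet> e j = (if i = j then 1 else 0))"

definition orthonormal_basis_of :: "(nat \<Rightarrow> 'a::real_inner) \<Rightarrow> 'a set \<Rightarrow> bool" where
  "orthonormal_basis_of e V \<longleftrightarrow> orthonormal_seq e \<and> closure (span (range e)) = V"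

definition null_perp :: "('a::real_inner \<Rightarrow> 'b::real_inner) \<Rightarrow> 'a set" where
  "null_perp K = {x. \<forall>z. K z = 0 \<longrightarrow> x \<bullet> z = 0}"

definition source_set :: "(nat \<Rightarrow> real) \<Rightarrow> (nat \<Rightarrow> 'a::real_inner) \<Rightarrow> real \<Rightarrow> real \<Rightarrow> 'a set" where
  "source_set s v \<nu> \<rho> =
     {x. \<exists>\<xi>. norm \<xi> \<le> \<rho> \<and> x = (\<Sum>j. (s j powr \<nu> * (\<xi> \<bullet> v j)) *\<^sub>R v j)}"

definition diag_dom :: "(nat \<Rightarrow> real) \<Rightarrow> (nat \<Rightarrow> 'a::real_inner) \<Rightarrow> 'a set" where
  "diag_dom d u = {y. summable (\<lambda>j. (d j * (y \<bullet> u j))\<^sup>2)}"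

definition diag_op :: "(nat \<Rightarrow> real) \<Rightarrow> (nat \<Rightarrow> 'a::real_inner) \<Rightarrow> 'a \<Rightarrow> 'a" where
  "diag_op d u y = (\<Sum>j. (d j * (y \<bullet> u j)) *\<^sub>R u j)"

end

theory Submission
  imports Defs
begin

text \<open>
  By the singular value decomposition, \<open>(K x, u_j) = sigma_j (x, v_j)\<close>, so \<open>S K\<close> acts
  diagonally in the bases \<open>(v_j)\<close> and \<open>(u_j)\<close> with entries
  \<open>d_j sigma_j \<asymp> j^(-(q+1+epsilon-p)/2)\<close>. These entries tend to 0, so the image of the
  unit ball is totally bounded (a bounded finite-dimensional head plus a uniformly small tail) and
  \<open>S K\<close> is compact. By Parseval, \<open>\<parallel>S (Y - y)\<parallel>\<^sup>2 = \<Sum>j d_j\<^sup>2 (Y - y, u_j)\<^sup>2\<close>,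
  whose expectation behaves like \<open>\<Sum>j j^(p-1-epsilon) j^(-p)\<close> and is finite since
  \<open>epsilon > 0\<close>. Finally \<open>sigma_j^nu \<asymp> j^(-q nu/2) = j^(-(q+1+epsilon-p) nu'/2) \<asymp> (d_j sigma_j)^nu'\<close>,
  so multiplying the coefficients of a source element by the bounded ratios
  \<open>sigma_j^nu / (d_j sigma_j)^nu'\<close> turns a representation with exponent \<open>nu\<close> into one with
  exponent \<open>nu'\<close>.
\<close>

section \<open>Orthonormal expansions\<close>

lemma orthonormal_seq_inner_sum:
  assumes "orthonormal_seq e" "finite A"
  shows "(\<Sum>j\<in>A. a j *\<^sub>R e j) \<bullet> e i = (if i \<in> A then a i else 0)"
proof -
  have "(\<Sum>j\<in>A. a j *\<^sub>R e j) \<bullet> e i = (\<Sum>j\<in>A. a j * (if j = i then 1 else 0))"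
    using assms(1) unfolding orthonormal_seq_def by (simp add: inner_sum_left)
  then show ?thesis
    using assms(2) by (simp add: sum.delta' if_distrib cong: if_cong)
qed

lemma orthonormal_seq_norm_sum:
  assumes "orthonormal_seq e" "finite A"
  shows "(norm (\<Sum>j\<in>A. a j *\<^sub>R e j))\<^sup>2 = (\<Sum>j\<in>A. (a j)\<^sup>2)"
proof -
  have "(norm (\<Sum>j\<in>A. a j *\<^sub>R e j))\<^sup>2 = (\<Sum>i\<in>A. a i * ((\<Sum>j\<in>A. a j *\<^sub>R e j) \<bullet> e i))"
    by (simp add: power2_norm_eq_inner inner_sum_right)
  then show ?thesis
    using orthonormal_seq_inner_sum[OF assms] by (simp add: power2_eq_square)
qed

lemma orthonormal_seq_norm: "orthonormal_seq e \<Longrightarrow> norm (e j) = 1"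
  by (simp add: orthonormal_seq_def norm_eq_sqrt_inner)

lemma orthonormal_seq_shift:
  "orthonormal_seq e \<Longrightarrow> orthonormal_seq (\<lambda>j. e (j + N))"
  by (simp add: orthonormal_seq_def)

lemma bessel_inequality:
  assumes e: "orthonormal_seq e"
  shows "summable (\<lambda>j. (x \<bullet> e j)\<^sup>2)" and "(\<Sum>j. (x \<bullet> e j)\<^sup>2) \<le> (norm x)\<^sup>2"
proof -
  have partial: "(\<Sum>j<n. (x \<bullet> e j)\<^sup>2) \<le> (norm x)\<^sup>2" for n
  proof -
    define s where "s = (\<Sum>j<n. (x \<bullet> e j) *\<^sub>R e j)"
    have xs: "x \<bullet> s = (\<Sum>j<n. (x \<bullet> e j)\<^sup>2)"
      unfolding s_def by (simp add: inner_sum_right power2_eq_square)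
    have ss: "s \<bullet> s = (\<Sum>j<n. (x \<bullet> e j)\<^sup>2)"
      using orthonormal_seq_norm_sum[OF e, of "{..<n}" "\<lambda>j. x \<bullet> e j"]
      by (simp add: s_def power2_norm_eq_inner)
    have "0 \<le> (x - s) \<bullet> (x - s)" by simp
    also have "\<dots> = x \<bullet> x - 2 * (x \<bullet> s) + s \<bullet> s"
      by (simp add: inner_diff_left inner_diff_right inner_commute)
    finally show ?thesis using xs ss by (simp add: power2_norm_eq_inner)
  qed
  show s: "summable (\<lambda>j. (x \<bullet> e j)\<^sup>2)"
    by (rule summableI_nonneg_bounded[OF _ partial]) simp
  show "(\<Sum>j. (x \<bullet> e j)\<^sup>2) \<le> (norm x)\<^sup>2"
    by (rule suminf_le_const[OF s partial])
qed

lemma orthonormal_series: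
  fixes e :: "nat \<Rightarrow> 'a::{real_inner,complete_space}"
  assumes e: "orthonormal_seq e" and a: "summable (\<lambda>j. (a j)\<^sup>2)"
  shows "summable (\<lambda>j. a j *\<^sub>R e j)"
    and "(\<Sum>j. a j *\<^sub>R e j) \<bullet> e i = a i"
    and "(norm (\<Sum>j. a j *\<^sub>R e j))\<^sup>2 = (\<Sum>j. (a j)\<^sup>2)"
proof -
  have "Cauchy (\<lambda>n. \<Sum>j<n. a j *\<^sub>R e j)"
    unfolding Cauchy_iff
  proof (intro allI impI)
    fix r :: real assume "r > 0"
    then obtain N where N: "\<forall>m\<ge>N. \<forall>n. norm (\<Sum>j=m..<n. (a j)\<^sup>2) < r\<^sup>2"
      using a[unfolded summable_Cauchy] by (meson zero_less_power)
    have tail: "norm ((\<Sum>j<n. a j *\<^sub>R e j) - (\<Sum>j<m. a j *\<^sub>R e j)) < r"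
      if "N \<le> m" "m \<le> n" for m n
    proof -
      have "(\<Sum>j<n. a j *\<^sub>R e j) - (\<Sum>j<m. a j *\<^sub>R e j) = (\<Sum>j=m..<n. a j *\<^sub>R e j)"
        using that(2) by (metis atLeast0LessThan sum_diff_nat_ivl zero_le)
      moreover have "(norm (\<Sum>j=m..<n. a j *\<^sub>R e j))\<^sup>2 < r\<^sup>2"
        using N that orthonormal_seq_norm_sum[OF e, of "{m..<n}" a] by (simp add: abs_less_iff)
      ultimately show ?thesis using \<open>r > 0\<close> by (simp add: power_less_imp_less_base)
    qed
    show "\<exists>M. \<forall>m\<ge>M. \<forall>n\<ge>M. norm ((\<Sum>j<m. a j *\<^sub>R e j) - (\<Sum>j<n. a j *\<^sub>R e j)) < r"
      by (metis nle_le norm_minus_commute tail)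
  qed
  then show sm: "summable (\<lambda>j. a j *\<^sub>R e j)"
    unfolding summable_iff_convergent by (rule Cauchy_convergent)
  have "(\<lambda>j. (a j *\<^sub>R e j) \<bullet> e i) sums ((\<Sum>j. a j *\<^sub>R e j) \<bullet> e i)"
    by (rule bounded_linear.sums[OF bounded_linear_inner_left summable_sums[OF sm]])
  moreover have "(\<lambda>j. (a j *\<^sub>R e j) \<bullet> e i) = (\<lambda>j. if j = i then a i else 0)"
    using e by (auto simp: orthonormal_seq_def)
  ultimately show "(\<Sum>j. a j *\<^sub>R e j) \<bullet> e i = a i"
    using sums_single[of i "\<lambda>_. a i"] sums_unique2 by metis
  have "(\<lambda>n. (norm (\<Sum>j<n. a j *\<^sub>R e j))\<^sup>2) \<longlonglongrightarrow> (norm (\<Sum>j. a j *\<^sub>R e j))\<^sup>2"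
    by (intro tendsto_intros summable_LIMSEQ[OF sm])
  then show "(norm (\<Sum>j. a j *\<^sub>R e j))\<^sup>2 = (\<Sum>j. (a j)\<^sup>2)"
    using LIMSEQ_unique[OF _ summable_LIMSEQ[OF a]] orthonormal_seq_norm_sum[OF e] by simp
qed

lemma summable_coeffs_bounded:
  fixes f :: "nat \<Rightarrow> 'a::real_inner"
  assumes f: "orthonormal_seq f" and a: "\<And>j. \<bar>a j\<bar> \<le> B * \<bar>x \<bullet> f j\<bar>"
  shows "summable (\<lambda>j. (a j)\<^sup>2)" and "(\<Sum>j. (a j)\<^sup>2) \<le> B\<^sup>2 * (norm x)\<^sup>2"
proof -
  have le: "(a j)\<^sup>2 \<le> B\<^sup>2 * (x \<bullet> f j)\<^sup>2" for j
    using power_mono[OF a[of j] abs_ge_zero, of 2] by (simp add: power_mult_distrib)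
  note bessel = bessel_inequality[OF f, of x]
  show s: "summable (\<lambda>j. (a j)\<^sup>2)"
    by (rule summable_comparison_test[OF _ summable_mult[OF bessel(1)]]) (use le in auto)
  have "(\<Sum>j. (a j)\<^sup>2) \<le> (\<Sum>j. B\<^sup>2 * (x \<bullet> f j)\<^sup>2)"
    by (rule suminf_le[OF le s summable_mult[OF bessel(1)]])
  also have "\<dots> = B\<^sup>2 * (\<Sum>j. (x \<bullet> f j)\<^sup>2)" by (rule suminf_mult[OF bessel(1)])
  also have "\<dots> \<le> B\<^sup>2 * (norm x)\<^sup>2" by (rule mult_left_mono[OF bessel(2)]) simp
  finally show "(\<Sum>j. (a j)\<^sup>2) \<le> B\<^sup>2 * (norm x)\<^sup>2" .
qed

lemma norm_orthonormal_series_le: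
  fixes e :: "nat \<Rightarrow> 'a::{real_inner,complete_space}" and f :: "nat \<Rightarrow> 'b::real_inner"
  assumes e: "orthonormal_seq e" and f: "orthonormal_seq f"
    and B: "B \<ge> 0" and a: "\<And>j. \<bar>a j\<bar> \<le> B * \<bar>x \<bullet> f j\<bar>"
  shows "norm (\<Sum>j. a j *\<^sub>R e j) \<le> B * norm x"
proof (rule power2_le_imp_le)
  show "(norm (\<Sum>j. a j *\<^sub>R e j))\<^sup>2 \<le> (B * norm x)\<^sup>2"
    using orthonormal_series(3)[OF e summable_coeffs_bounded(1)[OF f a]]
      summable_coeffs_bounded(2)[OF f a] by (simp add: power_mult_distrib)
qed (use B in simp)

section \<open>Orthogonal projection onto closed subspaces\<close>

lemma closed_subspace_nearest_point:
  fixes N :: "'a::{real_inner,complete_space} set"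
  assumes cl: "closed N" and sub: "subspace N"
  obtains n0 where "n0 \<in> N" "\<And>n. n \<in> N \<Longrightarrow> norm (w - n0) \<le> norm (w - n)"
proof -
  define \<delta> where "\<delta> = Inf ((\<lambda>n. (norm (w - n))\<^sup>2) ` N)"
  have N0: "0 \<in> N" using sub by (simp add: subspace_0)
  have low: "\<delta> \<le> (norm (w - n))\<^sup>2" if "n \<in> N" for n
    unfolding \<delta>_def using that by (intro cInf_lower bdd_belowI[of _ 0]) auto
  have "\<exists>n\<in>N. (norm (w - n))\<^sup>2 < \<delta> + 1 / (real k + 1)" for k
  proof -
    have "\<exists>y\<in>(\<lambda>n. (norm (w - n))\<^sup>2) ` N. y < \<delta> + 1 / (real k + 1)"
      unfolding \<delta>_def using N0 by (intro cInf_lessD) auto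
    then show ?thesis by auto
  qed
  then obtain m where m: "\<And>k. m k \<in> N" "\<And>k. (norm (w - m k))\<^sup>2 < \<delta> + 1 / (real k + 1)"
    by metis
  \<comment> \<open>Parallelogram law; the midpoint of \<open>m k\<close> and \<open>m l\<close> lies in \<open>N\<close>, so it is at squared distance at least \<open>\<delta>\<close> from \<open>w\<close>.\<close>
  have close: "(norm (m k - m l))\<^sup>2 \<le> 2 / (real k + 1) + 2 / (real l + 1)" for k l
  proof -
    have "(1/2) *\<^sub>R (m k + m l) \<in> N"
      using m(1) sub by (intro subspace_mul subspace_add) auto
    note mid = low[OF this]
    have "(w - m k) + (w - m l) = 2 *\<^sub>R (w - (1/2) *\<^sub>R (m k + m l))"
      by (simp add: algebra_simps scaleR_2)
    then have "(norm ((w - m k) + (w - m l)))\<^sup>2 = 4 * (norm (w - (1/2) *\<^sub>R (m k + m l)))\<^sup>2"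
      by (simp add: power_mult_distrib)
    moreover have "(norm ((w - m k) - (w - m l)))\<^sup>2 + (norm ((w - m k) + (w - m l)))\<^sup>2
        = 2 * (norm (w - m k))\<^sup>2 + 2 * (norm (w - m l))\<^sup>2"
      by (simp add: power2_norm_eq_inner inner_diff_left inner_diff_right inner_add_left
          inner_add_right inner_commute)
    moreover have "(norm ((w - m k) - (w - m l)))\<^sup>2 = (norm (m k - m l))\<^sup>2"
      by (simp add: norm_minus_commute)
    ultimately show ?thesis using mid m(2)[of k] m(2)[of l] by linarith
  qed
  have "Cauchy m"
  proof (rule metric_CauchyI)
    fix r :: real assume r: "r > 0"
    obtain M :: nat where M: "real M > 4 / r\<^sup>2" using reals_Archimedean2 by blast
    have small: "2 / (real k + 1) < r\<^sup>2 / 2" if "k \<ge> M" for k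
    proof -
      have "4 < real M * r\<^sup>2" using M r by (simp add: field_simps)
      also have "\<dots> \<le> (real k + 1) * r\<^sup>2" using that by (intro mult_right_mono) auto
      finally show ?thesis by (simp add: field_simps)
    qed
    have "dist (m k) (m l) < r" if "k \<ge> M" "l \<ge> M" for k l
    proof -
      have "(dist (m k) (m l))\<^sup>2 < r\<^sup>2"
        unfolding dist_norm using close[of k l] small[OF that(1)] small[OF that(2)] by linarith
      then show ?thesis using r by (simp add: power_less_imp_less_base)
    qed
    then show "\<exists>M. \<forall>k\<ge>M. \<forall>l\<ge>M. dist (m k) (m l) < r" by blast
  qed
  then obtain n0 where lim: "m \<longlonglongrightarrow> n0" using Cauchy_convergent convergent_def by blast
  have "(norm (w - n0))\<^sup>2 \<le> \<delta>"
  proof (rule LIMSEQ_le)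
    show "(\<lambda>k. (norm (w - m k))\<^sup>2) \<longlonglongrightarrow> (norm (w - n0))\<^sup>2" by (intro tendsto_intros lim)
    show "(\<lambda>k. \<delta> + 1 / (real k + 1)) \<longlonglongrightarrow> \<delta>"
      using tendsto_add[OF tendsto_const LIMSEQ_inverse_real_of_nat]
      by (simp add: inverse_eq_divide add.commute)
    show "\<exists>N. \<forall>k\<ge>N. (norm (w - m k))\<^sup>2 \<le> \<delta> + 1 / (real k + 1)"
      using m(2) less_imp_le by blast
  qed
  then have "norm (w - n0) \<le> norm (w - n)" if "n \<in> N" for n
    using low[OF that] by (meson order_trans power2_le_imp_le norm_ge_zero)
  with closed_sequentially[OF cl m(1) lim] show ?thesis by (rule that)
qed

lemma nearest_point_orthogonal:
  assumes sub: "subspace N" and n0: "n0 \<in> N" "n \<in> N"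
    and nearest: "\<And>n. n \<in> N \<Longrightarrow> norm (w - n0) \<le> norm (w - n)"
  shows "(w - n0) \<bullet> n = 0"
proof (cases "n = 0")
  case False
  define r where "r = w - n0"
  define t where "t = (r \<bullet> n) / (n \<bullet> n)"
  have A: "n \<bullet> n > 0" using False by simp
  have "n0 + t *\<^sub>R n \<in> N" using sub n0 by (intro subspace_add subspace_mul)
  from nearest[OF this] have "norm r \<le> norm (r - t *\<^sub>R n)"
    by (simp add: r_def diff_diff_eq)
  then have "r \<bullet> r \<le> (r - t *\<^sub>R n) \<bullet> (r - t *\<^sub>R n)"
    by (simp only: norm_le)
  also have "\<dots> = r \<bullet> r - 2 * t * (r \<bullet> n) + t * t * (n \<bullet> n)"
    by (simp add: inner_diff_left inner_diff_right inner_commute)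
  also have "\<dots> = r \<bullet> r - (r \<bullet> n)\<^sup>2 / (n \<bullet> n)"
    using A by (simp add: t_def power2_eq_square field_simps)
  finally have "(r \<bullet> n)\<^sup>2 / (n \<bullet> n) \<le> 0" by simp
  with A have "(r \<bullet> n)\<^sup>2 \<le> 0"
    by (meson divide_le_0_iff not_le)
  then show ?thesis by (simp add: r_def)
qed simp

lemma mem_closed_subspace_if_orthogonal_to_complement:
  fixes N :: "'a::{real_inner,complete_space} set"
  assumes cl: "closed N" and sub: "subspace N"
    and w: "\<And>z. (\<forall>n\<in>N. z \<bullet> n = 0) \<Longrightarrow> w \<bullet> z = 0"
  shows "w \<in> N"
proof -
  obtain n0 where n0: "n0 \<in> N" "\<And>n. n \<in> N \<Longrightarrow> norm (w - n0) \<le> norm (w - n)"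
    using closed_subspace_nearest_point[OF cl sub] by blast
  have "w \<bullet> (w - n0) = 0"
    using nearest_point_orthogonal[OF sub n0(1) _ n0(2)] by (intro w) simp
  moreover have "n0 \<bullet> (w - n0) = 0"
    using nearest_point_orthogonal[OF sub n0(1) n0(1) n0(2)] by (simp add: inner_commute)
  ultimately have "(w - n0) \<bullet> (w - n0) = 0" by (simp add: inner_diff_left)
  then have "w - n0 = 0" by simp
  with n0(1) show ?thesis by simp
qed

section \<open>Diagonal operators\<close>

lemma svd_coefficient:
  fixes K :: "'x::{real_inner,complete_space} \<Rightarrow> 'y::real_inner"
  assumes K: "bounded_linear K"
    and v_onb: "orthonormal_basis_of v (null_perp K)"
    and u: "orthonormal_seq u"
    and svd: "\<And>j. K (v j) = \<sigma> j *\<^sub>R u j"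
  shows "K x \<bullet> u j = \<sigma> j * (x \<bullet> v j)"
proof -
  have v: "orthonormal_seq v" and v_dense: "closure (span (range v)) = null_perp K"
    using v_onb unfolding orthonormal_basis_of_def by auto
  define a where "a i = x \<bullet> v i" for i
  have a: "summable (\<lambda>i. (a i)\<^sup>2)" unfolding a_def by (rule bessel_inequality(1)[OF v])
  define P where "P = (\<Sum>i. a i *\<^sub>R v i)"
  have "(x - P) \<bullet> v i = 0" for i
    using orthonormal_series(2)[OF v a] by (simp add: P_def a_def inner_diff_left)
  then have "span (range v) \<subseteq> {z. (x - P) \<bullet> z = 0}"
    using orthogonal_to_span unfolding orthogonal_def by blast
  then have "closure (span (range v)) \<subseteq> {z. (x - P) \<bullet> z = 0}"
    by (rule closure_minimal) (intro closed_Collect_eq continuous_intros)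
  with v_dense have perp: "\<And>z. z \<in> null_perp K \<Longrightarrow> (x - P) \<bullet> z = 0" by blast
  \<comment> \<open>so \<open>x - P\<close> lies in the kernel, a closed subspace equal to its double orthogonal complement\<close>
  have "closed {z. K z = 0}"
    using K by (intro closed_Collect_eq continuous_intros) (simp_all add: linear_continuous_on)
  moreover have "subspace {z. K z = 0}"
    using K by (simp add: bounded_linear.linear linear_subspace_kernel)
  ultimately have "x - P \<in> {z. K z = 0}"
    by (rule mem_closed_subspace_if_orthogonal_to_complement)
      (use perp in \<open>auto simp: null_perp_def inner_commute\<close>)
  then have KxP: "K x = K P"
    using K by (simp add: linear_diff bounded_linear.linear)
  have "(\<lambda>i. K (a i *\<^sub>R v i) \<bullet> u j) sums (K P \<bullet> u j)"
    unfolding P_def using orthonormal_series(1)[OF v a]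
    by (intro bounded_linear.sums[OF bounded_linear_inner_left] bounded_linear.sums[OF K]
        summable_sums)
  moreover have "(\<lambda>i. K (a i *\<^sub>R v i) \<bullet> u j) = (\<lambda>i. if i = j then \<sigma> j * a j else 0)"
    using u K by (auto simp: svd linear_scale bounded_linear.linear orthonormal_seq_def)
  ultimately have "K P \<bullet> u j = \<sigma> j * a j"
    using sums_single[of j "\<lambda>_. \<sigma> j * a j"] sums_unique2 by metis
  then show ?thesis by (simp add: KxP a_def)
qed

lemma bounded_linear_diagonal:
  fixes u :: "nat \<Rightarrow> 'y::{real_inner,complete_space}" and v :: "nat \<Rightarrow> 'x::real_inner"
  assumes u: "orthonormal_seq u" and v: "orthonormal_seq v" and c: "\<And>j. \<bar>c j\<bar> \<le> B"
  shows "bounded_linear (\<lambda>x. \<Sum>j. (c j * (x \<bullet> v j)) *\<^sub>R u j)"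
proof -
  have coeff: "\<bar>c j * (x \<bullet> v j)\<bar> \<le> B * \<bar>x \<bullet> v j\<bar>" for x j
    by (simp add: abs_mult mult_right_mono c)
  note sums = orthonormal_series(1)[OF u summable_coeffs_bounded(1)[OF v coeff]]
  have B: "B \<ge> 0" using c[of 0] by linarith
  show ?thesis
  proof (rule bounded_linear_intro)
    fix x y
    show "(\<Sum>j. (c j * ((x + y) \<bullet> v j)) *\<^sub>R u j)
        = (\<Sum>j. (c j * (x \<bullet> v j)) *\<^sub>R u j) + (\<Sum>j. (c j * (y \<bullet> v j)) *\<^sub>R u j)"
      by (simp add: suminf_add[OF sums sums] inner_add_left algebra_simps)
  next
    fix r x
    have "(\<Sum>j. (c j * ((r *\<^sub>R x) \<bullet> v j)) *\<^sub>R u j) = (\<Sum>j. r *\<^sub>R ((c j * (x \<bullet> v j)) *\<^sub>R u j))"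
      by (simp add: algebra_simps)
    also have "\<dots> = r *\<^sub>R (\<Sum>j. (c j * (x \<bullet> v j)) *\<^sub>R u j)"
      by (rule suminf_scaleR_right[symmetric, OF sums])
    finally show "(\<Sum>j. (c j * ((r *\<^sub>R x) \<bullet> v j)) *\<^sub>R u j) = r *\<^sub>R (\<Sum>j. (c j * (x \<bullet> v j)) *\<^sub>R u j)" .
  next
    fix x
    show "norm (\<Sum>j. (c j * (x \<bullet> v j)) *\<^sub>R u j) \<le> norm x * B"
      using norm_orthonormal_series_le[OF u v B coeff] by (simp add: mult.commute)
  qed
qed

lemma compact_bounded_combinations:
  fixes u :: "nat \<Rightarrow> 'a::real_normed_vector"
  shows "compact {(\<Sum>j<N. (c j * t j) *\<^sub>R u j) | t. \<forall>j. \<bar>t j\<bar> \<le> 1}"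
proof (induction N)
  case 0
  have "{(\<Sum>j<0. (c j * t j) *\<^sub>R u j) | t. \<forall>j. \<bar>t j\<bar> \<le> (1::real)} = {0}"
    by (auto intro!: exI[of _ "\<lambda>_. 0"])
  then show ?case by simp
next
  case (Suc N)
  define A where "A = {(\<Sum>j<N. (c j * t j) *\<^sub>R u j) | t. \<forall>j. \<bar>t j\<bar> \<le> (1::real)}"
  define B where "B = (\<lambda>s. (c N * s) *\<^sub>R u N) ` {-1..1::real}"
  have "compact B" unfolding B_def by (intro compact_continuous_image continuous_intros) auto
  moreover have "{(\<Sum>j<Suc N. (c j * t j) *\<^sub>R u j) | t. \<forall>j. \<bar>t j\<bar> \<le> 1} = {x + y | x y. x \<in> A \<and> y \<in> B}"
  proof (intro equalityI subsetI)
    fix z assume "z \<in> {(\<Sum>j<Suc N. (c j * t j) *\<^sub>R u j) | t. \<forall>j. \<bar>t j\<bar> \<le> 1}"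
    then obtain t where t: "\<forall>j. \<bar>t j\<bar> \<le> 1" "z = (\<Sum>j<Suc N. (c j * t j) *\<^sub>R u j)" by auto
    have "(\<Sum>j<N. (c j * t j) *\<^sub>R u j) \<in> A" unfolding A_def using t by auto
    moreover have "(c N * t N) *\<^sub>R u N \<in> B"
      unfolding B_def using t(1)[rule_format, of N] by (auto simp: abs_le_iff)
    ultimately show "z \<in> {x + y | x y. x \<in> A \<and> y \<in> B}" using t(2) by auto
  next
    fix z assume "z \<in> {x + y | x y. x \<in> A \<and> y \<in> B}"
    then obtain t s where t: "\<forall>j. \<bar>t j\<bar> \<le> 1" "s \<in> {-1..1}"
      "z = (\<Sum>j<N. (c j * t j) *\<^sub>R u j) + (c N * s) *\<^sub>R u N"
      unfolding A_def B_def by auto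
    then have "\<forall>j. \<bar>(t(N := s)) j\<bar> \<le> 1" "z = (\<Sum>j<Suc N. (c j * (t(N := s)) j) *\<^sub>R u j)"
      by (auto intro!: sum.cong)
    then show "z \<in> {(\<Sum>j<Suc N. (c j * t j) *\<^sub>R u j) | t. \<forall>j. \<bar>t j\<bar> \<le> 1}" by blast
  qed
  ultimately show ?case
    using compact_sums[OF Suc.IH[folded A_def]] by simp
qed

lemma norm_diagonal_tail_le:
  fixes u :: "nat \<Rightarrow> 'y::{real_inner,complete_space}" and v :: "nat \<Rightarrow> 'x::real_inner"
  assumes u: "orthonormal_seq u" and v: "orthonormal_seq v"
    and e: "e \<ge> 0" and tail: "\<And>j. j \<ge> N \<Longrightarrow> \<bar>c j\<bar> \<le> e"
  shows "norm ((\<Sum>j. (c j * (x \<bullet> v j)) *\<^sub>R u j) - (\<Sum>j<N. (c j * (x \<bullet> v j)) *\<^sub>R u j)) \<le> e * norm x"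
proof -
  define f where "f = (\<lambda>j. (c j * (x \<bullet> v j)) *\<^sub>R u j)"
  note u' = orthonormal_seq_shift[OF u, of N] and v' = orthonormal_seq_shift[OF v, of N]
  have coeff: "\<bar>c (j + N) * (x \<bullet> v (j + N))\<bar> \<le> e * \<bar>x \<bullet> v (j + N)\<bar>" for j
    by (simp add: abs_mult mult_right_mono tail)
  have "summable (\<lambda>j. f (j + N))"
    unfolding f_def by (rule orthonormal_series(1)[OF u' summable_coeffs_bounded(1)[OF v' coeff]])
  then have "suminf f - (\<Sum>j<N. f j) = (\<Sum>j. f (j + N))"
    by (simp add: suminf_split_initial_segment[of f N] summable_iff_shift)
  also have "norm \<dots> \<le> e * norm x"
    unfolding f_def by (rule norm_orthonormal_series_le[OF u' v' e coeff])
  finally show ?thesis unfolding f_def .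
qed

lemma compact_closure_if_finite_ball_covers:
  fixes S :: "'a::{metric_space,complete_space} set"
  assumes cover: "\<And>e. e > 0 \<Longrightarrow> \<exists>k. finite k \<and> S \<subseteq> (\<Union>z\<in>k. ball z e)"
  shows "compact (closure S)"
  unfolding compact_eq_totally_bounded
proof (intro conjI allI impI)
  show "uniform_space_class.complete (closure S)"
    by (rule complete_closed_subset[OF closed_closure subset_UNIV complete_UNIV])
  fix e :: real assume e: "e > 0"
  then obtain k where k: "finite k" "S \<subseteq> (\<Union>z\<in>k. ball z (e/2))"
    using cover[of "e/2"] by auto
  have "S \<subseteq> (\<Union>z\<in>k. cball z (e/2))"
    using k(2) ball_subset_cball by blast
  then have "closure S \<subseteq> (\<Union>z\<in>k. cball z (e/2))"
    using k(1) by (intro closure_minimal) auto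
  also have "\<dots> \<subseteq> (\<Union>z\<in>k. ball z e)" using e by auto
  finally show "\<exists>k. finite k \<and> closure S \<subseteq> (\<Union>z\<in>k. ball z e)"
    using k(1) by blast
qed

lemma compact_operator_diagonal:
  fixes u :: "nat \<Rightarrow> 'y::{real_inner,complete_space}" and v :: "nat \<Rightarrow> 'x::real_inner"
  assumes u: "orthonormal_seq u" and v: "orthonormal_seq v" and c: "c \<longlonglongrightarrow> 0"
  shows "compact_operator (\<lambda>x. \<Sum>j. (c j * (x \<bullet> v j)) *\<^sub>R u j)"
    (is "compact_operator ?T")
proof -
  obtain B where "\<And>j. \<bar>c j\<bar> \<le> B"
    using convergent_imp_Bseq[OF convergentI[OF c]] unfolding Bseq_def by auto
  then have T: "bounded_linear ?T" by (rule bounded_linear_diagonal[OF u v])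
  have "compact (closure (?T ` cball 0 1))"
  proof (rule compact_closure_if_finite_ball_covers)
    fix e :: real assume e: "e > 0"
    from LIMSEQ_D[OF c, of "e/2"] e obtain N where "\<forall>j\<ge>N. \<bar>c j\<bar> < e/2" by auto
    then have N: "\<And>j. j \<ge> N \<Longrightarrow> \<bar>c j\<bar> \<le> e / 2" by auto
    define H where "H = {(\<Sum>j<N. (c j * t j) *\<^sub>R u j) | t. \<forall>j. \<bar>t j\<bar> \<le> 1}"
    have "compact H" unfolding H_def by (rule compact_bounded_combinations)
    then obtain k where k: "finite k" "H \<subseteq> (\<Union>z\<in>k. ball z (e/2))"
      using e unfolding compact_eq_totally_bounded by (auto dest!: spec[of _ "e/2"])
    have "?T x \<in> (\<Union>z\<in>k. ball z e)" if x: "norm x \<le> 1" for x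
    proof -
      define h where "h = (\<Sum>j<N. (c j * (x \<bullet> v j)) *\<^sub>R u j)"
      have "\<bar>x \<bullet> v j\<bar> \<le> 1" for j
        using Cauchy_Schwarz_ineq2[of x "v j"] orthonormal_seq_norm[OF v] x by simp
      then have "h \<in> H" unfolding H_def h_def by (intro CollectI exI[of _ "\<lambda>j. x \<bullet> v j"]) auto
      then obtain z where z: "z \<in> k" "dist z h < e/2" using k by auto
      have "norm (?T x - h) \<le> e/2 * norm x"
        unfolding h_def using norm_diagonal_tail_le[OF u v _ N] e by simp
      also have "\<dots> \<le> e/2" using x e by (simp add: mult_left_le)
      finally have "dist z (?T x) < e"
        using z(2) dist_triangle[of z "?T x" h] by (simp add: dist_norm norm_minus_commute)
      with z(1) show ?thesis by auto
    qed
    with k(1) show "\<exists>k. finite k \<and> ?T ` cball 0 1 \<subseteq> (\<Union>z\<in>k. ball z e)" by auto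
  qed
  with T show ?thesis unfolding compact_operator_def by simp
qed

lemma svd_rescaled_operator:
  fixes K :: "'x::{real_inner,complete_space} \<Rightarrow> 'y::{real_inner,complete_space}"
  assumes K: "bounded_linear K" and v_onb: "orthonormal_basis_of v (null_perp K)"
    and u: "orthonormal_seq u" and svd: "\<And>j. K (v j) = \<sigma> j *\<^sub>R u j"
    and c: "(\<lambda>j. d j * \<sigma> j) \<longlonglongrightarrow> 0"
  shows "K x \<in> diag_dom d u"
    and "compact_operator (diag_op d u \<circ> K)"
    and "diag_op d u (K (v j)) = (d j * \<sigma> j) *\<^sub>R u j"
    and "(\<forall>j. x \<bullet> v j = 0) \<Longrightarrow> diag_op d u (K x) = 0"
proof -
  have v: "orthonormal_seq v" using v_onb by (simp add: orthonormal_basis_of_def)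
  have coeff: "d j * (y \<bullet> u j) = d j * \<sigma> j * (y' \<bullet> v j)" if "y = K y'" for y y' j
    using svd_coefficient[OF K v_onb u svd] that by simp
  have SK: "diag_op d u \<circ> K = (\<lambda>x. \<Sum>j. (d j * \<sigma> j * (x \<bullet> v j)) *\<^sub>R u j)"
    by (simp add: fun_eq_iff diag_op_def coeff)
  obtain B where "\<And>j. \<bar>d j * \<sigma> j\<bar> \<le> B"
    using convergent_imp_Bseq[OF convergentI[OF c]] unfolding Bseq_def by auto
  then have "\<bar>d j * \<sigma> j * (x \<bullet> v j)\<bar> \<le> B * \<bar>x \<bullet> v j\<bar>" for j
    by (simp add: abs_mult mult_right_mono)
  then have "summable (\<lambda>j. (d j * \<sigma> j * (x \<bullet> v j))\<^sup>2)"
    by (rule summable_coeffs_bounded(1)[OF v])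
  then show "K x \<in> diag_dom d u"
    by (simp add: diag_dom_def coeff)
  show "compact_operator (diag_op d u \<circ> K)"
    unfolding SK by (rule compact_operator_diagonal[OF u v c])
  have "(\<lambda>i. (d i * \<sigma> i * (v j \<bullet> v i)) *\<^sub>R u i) = (\<lambda>i. if i = j then (d j * \<sigma> j) *\<^sub>R u j else 0)"
    using v by (auto simp: orthonormal_seq_def)
  then show "diag_op d u (K (v j)) = (d j * \<sigma> j) *\<^sub>R u j"
    using SK sums_unique[OF sums_single[of j "\<lambda>_. (d j * \<sigma> j) *\<^sub>R u j"]] by (simp add: fun_eq_iff)
  show "(\<forall>j. x \<bullet> v j = 0) \<Longrightarrow> diag_op d u (K x) = 0"
    using SK by (simp add: fun_eq_iff)
qed

lemma diag_dom_add:
  assumes "y \<in> diag_dom d u" "z \<in> diag_dom d u"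
  shows "y + z \<in> diag_dom d u"
proof -
  have bound: "(d j * ((y + z) \<bullet> u j))\<^sup>2 \<le> 2 * (d j * (y \<bullet> u j))\<^sup>2 + 2 * (d j * (z \<bullet> u j))\<^sup>2" for j
  proof -
    have "(A + B)\<^sup>2 \<le> 2 * A\<^sup>2 + 2 * B\<^sup>2" for A B :: real
      using zero_le_square[of "A - B"] by (simp add: power2_eq_square algebra_simps)
    then show ?thesis by (simp add: inner_add_left distrib_left)
  qed
  have "summable (\<lambda>j. 2 * (d j * (y \<bullet> u j))\<^sup>2 + 2 * (d j * (z \<bullet> u j))\<^sup>2)"
    using assms by (intro summable_add summable_mult) (simp_all add: diag_dom_def)
  then have "summable (\<lambda>j. (d j * ((y + z) \<bullet> u j))\<^sup>2)"
    by (rule summable_comparison_test') (simp add: bound)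
  then show ?thesis by (simp add: diag_dom_def)
qed

lemma diag_op_diff:
  fixes u :: "nat \<Rightarrow> 'a::{real_inner,complete_space}"
  assumes u: "orthonormal_seq u" and y: "y \<in> diag_dom d u" and z: "z \<in> diag_dom d u"
  shows "diag_op d u y - diag_op d u z = diag_op d u (y - z)"
proof -
  have "summable (\<lambda>j. (d j * (w \<bullet> u j)) *\<^sub>R u j)" if "w \<in> diag_dom d u" for w
    using that by (intro orthonormal_series(1)[OF u]) (simp add: diag_dom_def)
  then have "diag_op d u y - diag_op d u z = (\<Sum>j. (d j * (y \<bullet> u j)) *\<^sub>R u j - (d j * (z \<bullet> u j)) *\<^sub>R u j)"
    unfolding diag_op_def using y z by (simp add: suminf_diff)
  then show ?thesis by (simp add: diag_op_def inner_diff_left algebra_simps)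
qed

lemma norm_diag_op:
  fixes u :: "nat \<Rightarrow> 'a::{real_inner,complete_space}"
  assumes "orthonormal_seq u" and "y \<in> diag_dom d u"
  shows "(norm (diag_op d u y))\<^sup>2 = (\<Sum>j. (d j * (y \<bullet> u j))\<^sup>2)"
  using assms unfolding diag_op_def diag_dom_def by (simp add: orthonormal_series(3))

section \<open>Two-sided power asymptotics\<close>

lemma asymp_equiv2_power2_imp:
  assumes "asymp_equiv2 (\<lambda>j. (f j)\<^sup>2) (\<lambda>j. (g j)\<^sup>2)"
    and f: "\<And>j. f j \<ge> 0" and g: "\<And>j. g j \<ge> 0"
  shows "asymp_equiv2 f g"
proof -
  obtain c1 c2 where c: "c1 > 0" "c2 > 0"
    and bounds: "\<And>j. c1 * (g j)\<^sup>2 \<le> (f j)\<^sup>2 \<and> (f j)\<^sup>2 \<le> c2 * (g j)\<^sup>2"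
    using assms(1) unfolding asymp_equiv2_def by blast
  have "sqrt c1 * g j \<le> f j \<and> f j \<le> sqrt c2 * g j" for j
  proof
    show "sqrt c1 * g j \<le> f j"
      by (rule power2_le_imp_le) (use c bounds[of j] f[of j] in \<open>simp_all add: power_mult_distrib\<close>)
    show "f j \<le> sqrt c2 * g j"
      by (rule power2_le_imp_le) (use c bounds[of j] g[of j] in \<open>simp_all add: power_mult_distrib\<close>)
  qed
  with c show ?thesis unfolding asymp_equiv2_def by (intro exI[of _ "sqrt c1"] exI[of _ "sqrt c2"]) auto
qed

lemma asymp_equiv2_mult_left:
  assumes "asymp_equiv2 a b" and "\<And>j. h j \<ge> 0"
  shows "asymp_equiv2 (\<lambda>j. h j * a j) (\<lambda>j. h j * b j)"
proof -
  obtain c1 c2 where c: "c1 > 0" "c2 > 0" and bounds: "\<And>j. c1 * b j \<le> a j \<and> a j \<le> c2 * b j"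
    using assms(1) unfolding asymp_equiv2_def by blast
  have "c1 * (h j * b j) \<le> h j * a j \<and> h j * a j \<le> c2 * (h j * b j)" for j
    using mult_left_mono[OF conjunct1[OF bounds[of j]] assms(2)[of j]]
      mult_left_mono[OF conjunct2[OF bounds[of j]] assms(2)[of j]]
    by (simp add: mult.left_commute)
  with c show ?thesis unfolding asymp_equiv2_def by blast
qed

lemma asymp_equiv2_tendsto_zero:
  assumes "asymp_equiv2 a b" and "b \<longlonglongrightarrow> 0"
  shows "a \<longlonglongrightarrow> 0"
proof -
  obtain c1 c2 where bounds: "\<And>j. c1 * b j \<le> a j \<and> a j \<le> c2 * b j"
    using assms(1) unfolding asymp_equiv2_def by blast
  show ?thesis
  proof (rule tendsto_sandwich)
    show "\<forall>\<^sub>F j in sequentially. c1 * b j \<le> a j" "\<forall>\<^sub>F j in sequentially. a j \<le> c2 * b j"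
      using bounds by simp_all
    show "(\<lambda>j. c1 * b j) \<longlonglongrightarrow> 0" "(\<lambda>j. c2 * b j) \<longlonglongrightarrow> 0"
      using tendsto_mult[OF tendsto_const assms(2)] by simp_all
  qed
qed

lemma Suc_powr_tendsto_zero:
  assumes "a < 0"
  shows "(\<lambda>j. real (Suc j) powr a) \<longlonglongrightarrow> 0"
  by (rule tendsto_neg_powr[OF _ filterlim_compose[OF filterlim_real_sequentially filterlim_Suc]])
    (use assms in simp)

lemma asymp_equiv2_Suc_powr_sqrt:
  assumes "asymp_equiv2 (\<lambda>j. (f j)\<^sup>2) (\<lambda>j. real (Suc j) powr a)" and "\<And>j. f j \<ge> 0"
  shows "asymp_equiv2 f (\<lambda>j. real (Suc j) powr (a / 2))"
proof (rule asymp_equiv2_power2_imp)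
  have "(\<lambda>j. (real (Suc j) powr (a / 2))\<^sup>2) = (\<lambda>j. real (Suc j) powr a)"
    by (simp add: power2_eq_square flip: powr_add)
  with assms(1) show "asymp_equiv2 (\<lambda>j. (f j)\<^sup>2) (\<lambda>j. (real (Suc j) powr (a / 2))\<^sup>2)"
    by simp
qed (simp_all add: assms(2))

lemma asymp_equiv2_Suc_powr_mult:
  assumes "asymp_equiv2 f (\<lambda>j. real (Suc j) powr a)"
  shows "asymp_equiv2 (\<lambda>j. real (Suc j) powr b * f j) (\<lambda>j. real (Suc j) powr (b + a))"
  using asymp_equiv2_mult_left[OF assms, of "\<lambda>j. real (Suc j) powr b"] by (simp add: powr_add)

lemma integrable_if_asymp_equiv2_Suc_powr:
  assumes "asymp_equiv2 (\<lambda>j. \<integral>\<omega>. f j \<omega> \<partial>M) (\<lambda>j. real (Suc j) powr a)"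
  shows "integrable M (f j)"
proof (rule ccontr)
  obtain c1 where "c1 > 0" and "c1 * real (Suc j) powr a \<le> (\<integral>\<omega>. f j \<omega> \<partial>M)"
    using assms unfolding asymp_equiv2_def by blast
  moreover assume "\<not> integrable M (f j)"
  then have "(\<integral>\<omega>. f j \<omega> \<partial>M) = 0" by (rule not_integrable_integral_eq)
  ultimately show False by (simp add: mult_le_0_iff)
qed

lemma summable_Suc_powr_mult_asymp:
  assumes V: "asymp_equiv2 V (\<lambda>j. real (Suc j) powr (- p))" and a: "a - p < -1"
  shows "summable (\<lambda>j. real (Suc j) powr a * V j)"
proof -
  obtain c1 c2 where c: "c1 > 0"
    and bounds: "\<And>j. c1 * real (Suc j) powr (- p) \<le> V j \<and> V j \<le> c2 * real (Suc j) powr (- p)"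
    using V unfolding asymp_equiv2_def by blast
  have "summable (\<lambda>j. real j powr (a - p))"
    using a by (simp add: summable_real_powr_iff)
  then have "summable (\<lambda>j. real (Suc j) powr (a - p))"
    using summable_Suc_iff[of "\<lambda>j. real j powr (a - p)"] by simp
  then have g: "summable (\<lambda>j. c2 * real (Suc j) powr (a - p))"
    by (rule summable_mult)
  have "norm (real (Suc j) powr a * V j) \<le> c2 * real (Suc j) powr (a - p)" for j
  proof -
    have "0 \<le> c1 * real (Suc j) powr (- p)" using c by simp
    then have "V j \<ge> 0" using bounds[of j] by linarith
    then have "norm (real (Suc j) powr a * V j) = real (Suc j) powr a * V j" by simp
    also have "\<dots> \<le> real (Suc j) powr a * (c2 * real (Suc j) powr (- p))"
      using bounds[of j] by (intro mult_left_mono) auto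
    also have "\<dots> = c2 * real (Suc j) powr (a - p)"
      by (simp add: powr_diff powr_minus divide_inverse)
    finally show ?thesis .
  qed
  with g show ?thesis by (rule summable_comparison_test')
qed

section \<open>Source sets\<close>

lemma powr_le_mult_powr_if_asymp_equiv2:
  assumes s: "asymp_equiv2 s (\<lambda>j. real (Suc j) powr a)"
    and t: "asymp_equiv2 t (\<lambda>j. real (Suc j) powr b)"
    and \<nu>: "\<nu> \<ge> 0" and \<nu>': "\<nu>' \<ge> 0" and exps: "a * \<nu> = b * \<nu>'"
  shows "\<exists>R>0. \<forall>j. s j powr \<nu> \<le> R * t j powr \<nu>'"
proof -
  obtain c1 c2 where c: "c1 > 0" "c2 > 0"
    and s_le: "\<And>j. s j \<le> c2 * real (Suc j) powr a"
    and s_ge: "\<And>j. c1 * real (Suc j) powr a \<le> s j"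
    using s unfolding asymp_equiv2_def by blast
  obtain C1 where C1: "C1 > 0" and t_ge: "\<And>j. C1 * real (Suc j) powr b \<le> t j"
    using t unfolding asymp_equiv2_def by blast
  have "s j powr \<nu> \<le> c2 powr \<nu> / C1 powr \<nu>' * t j powr \<nu>'" for j
  proof -
    define n where "n = real (Suc j)"
    have n: "n > 0" by (simp add: n_def)
    have "c1 * n powr a > 0" using c(1) n by simp
    then have "s j > 0" using s_ge[of j] by (simp add: n_def)
    then have "s j powr \<nu> \<le> (c2 * n powr a) powr \<nu>"
      using s_le[of j] \<nu> by (simp add: n_def powr_mono2)
    also have "\<dots> = c2 powr \<nu> / C1 powr \<nu>' * (C1 * n powr b) powr \<nu>'"
    proof -
      have "(n powr a) powr \<nu> = (n powr b) powr \<nu>'"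
        using exps by (simp add: powr_powr)
      then show ?thesis using c C1 by (simp add: powr_mult)
    qed
    also have "\<dots> \<le> c2 powr \<nu> / C1 powr \<nu>' * t j powr \<nu>'"
      using t_ge[of j] C1 n \<nu>' by (intro mult_left_mono powr_mono2) (simp_all add: n_def)
    finally show ?thesis .
  qed
  moreover have "c2 powr \<nu> / C1 powr \<nu>' > 0" using c C1 by simp
  ultimately show ?thesis by blast
qed

lemma source_set_subset:
  fixes v :: "nat \<Rightarrow> 'a::{real_inner,complete_space}"
  assumes v: "orthonormal_seq v" and t: "\<And>j. t j > 0"
    and R: "\<And>j. s j powr \<nu> \<le> R * t j powr \<nu>'"
  shows "source_set s v \<nu> \<rho> \<subseteq> source_set t v \<nu>' (R * \<rho>)"
proof
  fix x assume "x \<in> source_set s v \<nu> \<rho>"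
  then obtain \<xi> where \<xi>: "norm \<xi> \<le> \<rho>" "x = (\<Sum>j. (s j powr \<nu> * (\<xi> \<bullet> v j)) *\<^sub>R v j)"
    unfolding source_set_def by auto
  define r where "r j = s j powr \<nu> / t j powr \<nu>'" for j
  have r: "0 \<le> r j" "r j \<le> R" for j
    using R[of j] t[of j] by (simp_all add: r_def divide_le_eq)
  have coeff: "\<bar>r j * (\<xi> \<bullet> v j)\<bar> \<le> R * \<bar>\<xi> \<bullet> v j\<bar>" for j
    using r by (simp add: abs_mult mult_right_mono)
  define \<xi>' where "\<xi>' = (\<Sum>j. (r j * (\<xi> \<bullet> v j)) *\<^sub>R v j)"
  have "R \<ge> 0" using r[of 0] by linarith
  then have "norm \<xi>' \<le> R * norm \<xi>"
    unfolding \<xi>'_def by (rule norm_orthonormal_series_le[OF v v _ coeff])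
  also have "\<dots> \<le> R * \<rho>" by (rule mult_left_mono[OF \<xi>(1) \<open>R \<ge> 0\<close>])
  finally have "norm \<xi>' \<le> R * \<rho>" .
  moreover have "t j powr \<nu>' * (\<xi>' \<bullet> v j) = s j powr \<nu> * (\<xi> \<bullet> v j)" for j
    using orthonormal_series(2)[OF v summable_coeffs_bounded(1)[OF v coeff]] t[of j]
    by (simp add: \<xi>'_def r_def)
  ultimately show "x \<in> source_set t v \<nu>' (R * \<rho>)"
    unfolding source_set_def using \<xi>(2) by auto
qed

lemma source_set_transfer:
  fixes v :: "nat \<Rightarrow> 'a::{real_inner,complete_space}"
  assumes v: "orthonormal_seq v"
    and s: "asymp_equiv2 s (\<lambda>j. real (Suc j) powr a)"
    and t: "asymp_equiv2 t (\<lambda>j. real (Suc j) powr b)" "\<And>j. t j > 0"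
    and "\<nu> \<ge> 0" "\<nu>' \<ge> 0" "a * \<nu> = b * \<nu>'"
  shows "\<exists>c>0. \<forall>\<rho>>0. \<forall>x \<in> source_set s v \<nu> \<rho>. x \<in> source_set t v \<nu>' (c * \<rho>)"
proof -
  obtain R where R: "R > 0" "\<And>j. s j powr \<nu> \<le> R * t j powr \<nu>'"
    using powr_le_mult_powr_if_asymp_equiv2[OF s t(1)] assms(5-7) by blast
  have "source_set s v \<nu> \<rho> \<subseteq> source_set t v \<nu>' (R * \<rho>)" for \<rho>
    using v t(2) R(2) by (rule source_set_subset)
  with R(1) show ?thesis by blast
qed

section \<open>Second moments of the rescaled data\<close>

lemma nn_integral_suminf_finite:
  assumes f: "\<And>j \<omega>. f j \<omega> \<ge> 0" and int: "\<And>j. integrable M (f j)"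
    and sum: "summable (\<lambda>j. \<integral>\<omega>. f j \<omega> \<partial>M)"
  shows "AE \<omega> in M. summable (\<lambda>j. f j \<omega>)"
    and "(\<integral>\<^sup>+\<omega>. ennreal (\<Sum>j. f j \<omega>) \<partial>M) < \<infinity>"
proof -
  define W where "W \<omega> = (\<Sum>j. ennreal (f j \<omega>))" for \<omega>
  have meas: "(\<lambda>\<omega>. ennreal (f j \<omega>)) \<in> borel_measurable M" for j
    using borel_measurable_integrable[OF int] by measurable
  have "(\<integral>\<^sup>+\<omega>. W \<omega> \<partial>M) = (\<Sum>j. \<integral>\<^sup>+\<omega>. ennreal (f j \<omega>) \<partial>M)"
    unfolding W_def by (rule nn_integral_suminf[OF meas])
  also have "\<dots> = (\<Sum>j. ennreal (\<integral>\<omega>. f j \<omega> \<partial>M))"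
    using int f by (simp add: nn_integral_eq_integral)
  also have "\<dots> = ennreal (\<Sum>j. \<integral>\<omega>. f j \<omega> \<partial>M)"
    using sum f by (intro suminf_ennreal2) (simp_all add: integral_nonneg_AE)
  finally have W: "(\<integral>\<^sup>+\<omega>. W \<omega> \<partial>M) < \<infinity>" by simp
  have "W \<in> borel_measurable M"
    unfolding W_def using borel_measurable_suminf_order[OF meas] by simp
  then have "AE \<omega> in M. W \<omega> \<noteq> \<infinity>"
    using W by (intro nn_integral_PInf_AE) simp_all
  then show summ: "AE \<omega> in M. summable (\<lambda>j. f j \<omega>)"
    by eventually_elim (use f in \<open>auto simp: W_def intro: summable_suminf_not_top\<close>)
  have "AE \<omega> in M. ennreal (\<Sum>j. f j \<omega>) = W \<omega>"
    using summ by eventually_elim (use f in \<open>simp add: W_def suminf_ennreal2\<close>)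
  with W show "(\<integral>\<^sup>+\<omega>. ennreal (\<Sum>j. f j \<omega>) \<partial>M) < \<infinity>"
    by (simp add: nn_integral_cong_AE)
qed

lemma diag_op_second_moment_finite:
  fixes u :: "nat \<Rightarrow> 'y::{real_inner,complete_space}"
  assumes u: "orthonormal_seq u" and y: "y \<in> diag_dom d u"
    and int: "\<And>j. integrable M (\<lambda>\<omega>. ((Y \<omega> - y) \<bullet> u j)\<^sup>2)"
    and sum: "summable (\<lambda>j. (d j)\<^sup>2 * (\<integral>\<omega>. ((Y \<omega> - y) \<bullet> u j)\<^sup>2 \<partial>M))"
  shows "AE \<omega> in M. Y \<omega> \<in> diag_dom d u"
    and "(\<integral>\<^sup>+\<omega>. ennreal ((norm (diag_op d u (Y \<omega>) - diag_op d u y))\<^sup>2) \<partial>M) < \<infinity>"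
proof -
  define f where "f = (\<lambda>j \<omega>. (d j * ((Y \<omega> - y) \<bullet> u j))\<^sup>2)"
  have "\<And>j \<omega>. f j \<omega> \<ge> 0" by (simp add: f_def)
  moreover have "integrable M (f j)" for j
    using int[of j] by (simp add: f_def power_mult_distrib)
  moreover have "summable (\<lambda>j. \<integral>\<omega>. f j \<omega> \<partial>M)"
    using sum by (simp add: f_def power_mult_distrib)
  ultimately have moments: "AE \<omega> in M. summable (\<lambda>j. f j \<omega>)"
    "(\<integral>\<^sup>+\<omega>. ennreal (\<Sum>j. f j \<omega>) \<partial>M) < \<infinity>"
    by (rule nn_integral_suminf_finite)+
  have dom: "Y \<omega> - y \<in> diag_dom d u" if "summable (\<lambda>j. f j \<omega>)" for \<omega>
    using that by (simp add: diag_dom_def f_def)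
  show "AE \<omega> in M. Y \<omega> \<in> diag_dom d u"
    using moments(1)
  proof eventually_elim
    case (elim \<omega>)
    show ?case using diag_dom_add[OF dom[OF elim] y] by simp
  qed
  have "AE \<omega> in M. ennreal ((norm (diag_op d u (Y \<omega>) - diag_op d u y))\<^sup>2) = ennreal (\<Sum>j. f j \<omega>)"
    using moments(1)
  proof eventually_elim
    case (elim \<omega>)
    have "Y \<omega> \<in> diag_dom d u" using diag_dom_add[OF dom[OF elim] y] by simp
    then show ?case
      using diag_op_diff[OF u _ y] norm_diag_op[OF u dom[OF elim]] by (simp add: f_def)
  qed
  with moments(2) show "(\<integral>\<^sup>+\<omega>. ennreal ((norm (diag_op d u (Y \<omega>) - diag_op d u y))\<^sup>2) \<partial>M) < \<infinity>"
    by (simp add: nn_integral_cong_AE)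
qed

theorem mainTheorem9:
  fixes K :: "'x::{real_inner, complete_space} \<Rightarrow> 'y::{real_inner, complete_space, second_countable_topology}"
    and \<sigma> :: "nat \<Rightarrow> real" and u :: "nat \<Rightarrow> 'y" and v :: "nat \<Rightarrow> 'x"
    and p q \<epsilon> \<nu> :: real
    and M :: "'w measure" and Y1 :: "'w \<Rightarrow> 'y" and xhat :: 'x
  assumes K_compact: "compact_operator K"
    and K_dense: "closure (range K) = UNIV"
    and u_onb: "orthonormal_basis_of u UNIV"
    and v_onb: "orthonormal_basis_of v (null_perp K)"
    and \<sigma>_pos: "\<And>j. \<sigma> j > 0"
    and \<sigma>_mono: "antimono \<sigma>"
    and \<sigma>_lim: "\<sigma> \<longlonglongrightarrow> 0"
    and svd: "\<And>j. K (v j) = \<sigma> j *\<^sub>R u j"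
    and p_gt: "p > 1" and q_gt: "q > p - 1"
    and \<sigma>_asymp: "asymp_equiv2 (\<lambda>j. (\<sigma> j)\<^sup>2) (\<lambda>j. real (Suc j) powr (- q))"
    and prob: "prob_space M"
    and Y1_meas: "Y1 \<in> borel_measurable M"
    and Y1_int: "integrable M Y1"
    and Y1_mean: "(\<integral>\<omega>. Y1 \<omega> \<partial>M) = K xhat"
    and Y1_var: "asymp_equiv2 (\<lambda>j. \<integral>\<omega>. ((Y1 \<omega> - K xhat) \<bullet> u j)\<^sup>2 \<partial>M)
                              (\<lambda>j. real (Suc j) powr (- p))"
    and \<epsilon>_pos: "0 < \<epsilon>" and \<epsilon>_lt: "\<epsilon> < p - 1"
    and \<nu>_pos: "\<nu> > 0"
  shows "let d = (\<lambda>j. real (Suc j) powr ((p - 1 - \<epsilon>) / 2));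
             S = diag_op d u;
             \<nu>' = q / (q + 1 + \<epsilon> - p) * \<nu>
         in (\<forall>x. K x \<in> diag_dom d u)
          \<and> compact_operator (S \<circ> K)
          \<and> (\<forall>j. d j * \<sigma> j > 0 \<and> S (K (v j)) = (d j * \<sigma> j) *\<^sub>R u j)
          \<and> (\<forall>x. (\<forall>j. x \<bullet> v j = 0) \<longrightarrow> S (K x) = 0)
          \<and> asymp_equiv2 (\<lambda>j. d j * \<sigma> j) (\<lambda>j. real (Suc j) powr (- (q + 1 + \<epsilon> - p) / 2))
          \<and> (AE \<omega> in M. Y1 \<omega> \<in> diag_dom d u)
          \<and> (\<integral>\<^sup>+\<omega>. ennreal ((norm (S (Y1 \<omega>) - S (K xhat)))\<^sup>2) \<partial>M) < \<infinity>
          \<and> \<nu>' > \<nu>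
          \<and> (\<exists>c>0. \<forall>\<rho>>0. \<forall>x \<in> source_set \<sigma> v \<nu> \<rho>.
                 x \<in> source_set (\<lambda>j. d j * \<sigma> j) v \<nu>' (c * \<rho>))"
proof -
  define d where "d = (\<lambda>j. real (Suc j) powr ((p - 1 - \<epsilon>) / 2))"
  define \<beta> where "\<beta> = q + 1 + \<epsilon> - p"
  have \<beta>: "\<beta> > 0" and exponent: "(p - 1 - \<epsilon>) / 2 + - q / 2 = - \<beta> / 2"
    using q_gt \<epsilon>_pos by (simp_all add: \<beta>_def field_simps)
  have u: "orthonormal_seq u" and v: "orthonormal_seq v" and K: "bounded_linear K"
    using u_onb v_onb K_compact by (simp_all add: orthonormal_basis_of_def compact_operator_def)
  have \<sigma>_rate: "asymp_equiv2 \<sigma> (\<lambda>j. real (Suc j) powr (- q / 2))"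
    using asymp_equiv2_Suc_powr_sqrt[OF \<sigma>_asymp] \<sigma>_pos by (simp add: less_imp_le)
  have c_rate: "asymp_equiv2 (\<lambda>j. d j * \<sigma> j) (\<lambda>j. real (Suc j) powr (- \<beta> / 2))"
    using asymp_equiv2_Suc_powr_mult[OF \<sigma>_rate, of "(p - 1 - \<epsilon>) / 2"] by (simp only: d_def exponent)
  have "(\<lambda>j. d j * \<sigma> j) \<longlonglongrightarrow> 0"
    using asymp_equiv2_tendsto_zero[OF c_rate Suc_powr_tendsto_zero] \<beta> by simp
  note SK = svd_rescaled_operator[OF K v_onb u svd this]
  have "summable (\<lambda>j. (d j)\<^sup>2 * (\<integral>\<omega>. ((Y1 \<omega> - K xhat) \<bullet> u j)\<^sup>2 \<partial>M))"
    using summable_Suc_powr_mult_asymp[OF Y1_var, of "p - 1 - \<epsilon>"] \<epsilon>_pos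
    by (simp add: d_def power2_eq_square flip: powr_add)
  note moment = diag_op_second_moment_finite[OF u SK(1)
      integrable_if_asymp_equiv2_Suc_powr[OF Y1_var] this]
  have "q / \<beta> > 1" using \<beta> \<epsilon>_lt by (simp add: \<beta>_def field_simps)
  then have \<nu>'_gt: "q / \<beta> * \<nu> > \<nu>" using mult_strict_right_mono[OF _ \<nu>_pos] by fastforce
  have "d j * \<sigma> j > 0" for j using \<sigma>_pos by (simp add: d_def)
  moreover from this have "\<exists>c>0. \<forall>\<rho>>0. \<forall>x \<in> source_set \<sigma> v \<nu> \<rho>.
      x \<in> source_set (\<lambda>j. d j * \<sigma> j) v (q / \<beta> * \<nu>) (c * \<rho>)"
    using \<beta> \<nu>_pos \<nu>'_gt by (intro source_set_transfer[OF v \<sigma>_rate c_rate]) simp_all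
  ultimately show ?thesis
    unfolding Let_def d_def[symmetric] \<beta>_def[symmetric]
    using SK moment c_rate \<nu>'_gt by blast
qed

end
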